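(* Let $X$ and $Y$ be any words. Then $X\sim Y$ if and only if there is a sequence of swaps between $X$ and $Y$ in which every swap is of type $(U,D)$ for some upper prime $U$ and some lower prime $D$.
   Context: $\mathcal{A}$ is the free associative $\mathbb{C}$-algebra on noncommuting generators $L,R$; words are finite products of these letters. A word is balanced if it contains equally many $L$'s and $R$'s. $\mathcal{J}$ is the two-sided ideal generated by $\{FG-GF : F,G \text{ nonempty balanced words}\}$, and $X\sim Y$ means $X-Y\in\mathcal{J}$. For nonempty balanced $F,G$ and words $W_1,W_2$, the words $W_1FGW_2$ and $W_1GFW_2$ are related by a swap of type $(F,G)$ (same as type $(G,F)$); a sequence of swaps between $X$ and $Y$ is a sequence $Z_1=X,\dots,Z_k=Y$ with consecutive words related by a swap. A word is prime if it is nonempty, balanced, and not a product of two nonempty balanced words. For balanced $W=a_1\cdots a_n$, $e_k(W)=\sum_{i=1}^k\overline{a_i}$ with $\overline{R}=1$, $\overline{L}=-1$. A prime $P$ of length $n$ is an upper prime if $e_k(P)>0$ for $1\le k\le n-1$, and a lower prime if $e_k(P)<0$ for $1\le k\le n-1$. *)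

theory Defs
  imports Complex_Main
begin

datatype letter = L | R

type_synonym word = "letter list"

text \<open>Elements of the free associative algebra C<L,R>: finitely supported
  coefficient functions on words.\<close>
type_synonym alg = "word \<Rightarrow> complex"

definition fin_supp :: "alg \<Rightarrow> bool" where
  "fin_supp p \<longleftrightarrow> finite {w. p w \<noteq> 0}"

definition mon :: "word \<Rightarrow> alg" where
  "mon w = (\<lambda>v. if v = w then 1 else 0)"

definition amul :: "alg \<Rightarrow> alg \<Rightarrow> alg" where
  "amul p q = (\<lambda>w. \<Sum>i\<le>length w. p (take i w) * q (drop i w))"

definition balanced :: "word \<Rightarrow> bool" where
  "balanced w \<longleftrightarrow> length (filter (\<lambda>a. a = L) w) = length (filter (\<lambda>a. a = R) w)"

inductive_set Jideal :: "alg set" where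
  gen: "F \<noteq> [] \<Longrightarrow> G \<noteq> [] \<Longrightarrow> balanced F \<Longrightarrow> balanced G \<Longrightarrow>
        (\<lambda>w. mon (F @ G) w - mon (G @ F) w) \<in> Jideal"
| zero: "(\<lambda>w. 0) \<in> Jideal"
| add: "a \<in> Jideal \<Longrightarrow> b \<in> Jideal \<Longrightarrow> (\<lambda>w. a w + b w) \<in> Jideal"
| lmul: "fin_supp c \<Longrightarrow> a \<in> Jideal \<Longrightarrow> amul c a \<in> Jideal"
| rmul: "fin_supp c \<Longrightarrow> a \<in> Jideal \<Longrightarrow> amul a c \<in> Jideal"

definition sim :: "word \<Rightarrow> word \<Rightarrow> bool" where
  "sim X Y \<longleftrightarrow> (\<lambda>w. mon X w - mon Y w) \<in> Jideal"

definition lval :: "letter \<Rightarrow> int" where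
  "lval a = (if a = R then 1 else -1)"

definition ek :: "nat \<Rightarrow> word \<Rightarrow> int" where
  "ek k W = (\<Sum>i<k. lval (W ! i))"

definition prime_word :: "word \<Rightarrow> bool" where
  "prime_word P \<longleftrightarrow> P \<noteq> [] \<and> balanced P \<and>
     \<not> (\<exists>A B. A \<noteq> [] \<and> B \<noteq> [] \<and> balanced A \<and> balanced B \<and> P = A @ B)"

definition upper_prime :: "word \<Rightarrow> bool" where
  "upper_prime P \<longleftrightarrow> prime_word P \<and> (\<forall>k. 1 \<le> k \<and> k \<le> length P - 1 \<longrightarrow> ek k P > 0)"

definition lower_prime :: "word \<Rightarrow> bool" where
  "lower_prime P \<longleftrightarrow> prime_word P \<and> (\<forall>k. 1 \<le> k \<and> k \<le> length P - 1 \<longrightarrow> ek k P < 0)"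

definition swap_of_type :: "word \<Rightarrow> word \<Rightarrow> word \<Rightarrow> word \<Rightarrow> bool" where
  "swap_of_type F G X Y \<longleftrightarrow> (\<exists>W1 W2.
     (X = W1 @ F @ G @ W2 \<and> Y = W1 @ G @ F @ W2) \<or>
     (X = W1 @ G @ F @ W2 \<and> Y = W1 @ F @ G @ W2))"

definition UD_swap :: "word \<Rightarrow> word \<Rightarrow> bool" where
  "UD_swap X Y \<longleftrightarrow> (\<exists>U D. upper_prime U \<and> lower_prime D \<and> swap_of_type U D X Y)"

end

theory Submission
  imports Defs
begin

text \<open>
  Swaps of balanced words generate the same congruence as swaps of an upper prime with a
  lower prime. Indeed, to commute balanced \<open>F\<close> and \<open>G\<close> one factors them into primes, and a
  prime word has the shape \<open>x A y\<close> with \<open>x \<noteq> y\<close> and \<open>A\<close> balanced, upper iff \<open>x = R\<close>.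
  Two upper primes \<open>RAL\<close>, \<open>RBL\<close> are commuted by induction through
  \<open>RALRBL \<leadsto> RLRABL \<leadsto> RLRBAL \<leadsto> RBLRAL\<close>, similarly two lower ones, and an upper and
  a lower prime by a single swap.

  So \<open>X \<sim> Y\<close> follows from a chain of such swaps because \<open>J\<close> contains every balanced swap
  in every context. Conversely, pairing an element of \<open>J\<close> against a function on words that
  is invariant under balanced swaps gives \<open>0\<close>: this holds for the generators, and the class
  of invariant functions is closed under \<open>\<phi> \<mapsto> \<phi> (u \<cdot> _ \<cdot> v)\<close>, which is what multiplying by a
  monomial does to the pairing. Pairing \<open>X - Y\<close> with the indicator of the swap class of \<open>X\<close>
  shows that \<open>Y\<close> lies in that class.
\<close>

lemma lval_cases: "lval a = 1 \<or> lval a = -1"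
  by (simp add: lval_def)

lemma balanced_iff_sum_lval: "balanced W \<longleftrightarrow> sum_list (map lval W) = 0"
proof -
  have "sum_list (map lval W) =
      int (length (filter (\<lambda>a. a = R) W)) - int (length (filter (\<lambda>a. a = L) W))"
    by (induction W) (auto simp: lval_def, metis letter.exhaust)
  then show ?thesis
    by (auto simp: balanced_def)
qed

lemma ek_eq_sum_take: "k \<le> length W \<Longrightarrow> ek k W = sum_list (map lval (take k W))"
  by (simp add: ek_def sum_list_sum_nth atLeast0LessThan)

lemma ek_Suc: "ek (Suc k) W = ek k W + lval (W ! k)"
  by (simp add: ek_def)

lemma balanced_iff_ek_length: "balanced W \<longleftrightarrow> ek (length W) W = 0"
  by (simp add: ek_eq_sum_take balanced_iff_sum_lval)

lemma balanced_append: "balanced A \<Longrightarrow> balanced (A @ B) \<longleftrightarrow> balanced B"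
  by (simp add: balanced_iff_sum_lval)

lemma prime_word_ek_nonzero:
  assumes "prime_word P" "0 < k" "k < length P"
  shows "ek k P \<noteq> 0"
proof
  assume "ek k P = 0"
  then have "balanced (take k P)"
    using assms(3) by (simp add: ek_eq_sum_take balanced_iff_sum_lval)
  moreover have "balanced (drop k P)"
    using assms(1) calculation balanced_append[of "take k P" "drop k P"]
    by (simp add: prime_word_def)
  ultimately show False
    using assms unfolding prime_word_def
    by (metis append_take_drop_id drop_eq_Nil not_less not_gr_zero take_eq_Nil)
qed

text \<open>Inside a prime word \<open>ek\<close> never vanishes and moves in steps of \<open>\<plusminus>1\<close>, so it keeps
  the sign of its first step.\<close>
lemma prime_word_ek_sign:
  assumes "prime_word P" "0 < k" "k < length P"
  shows "ek k P * lval (hd P) > 0"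
  using assms(2,3)
proof (induction k)
  case 0
  then show ?case by simp
next
  case (Suc k)
  show ?case
  proof (cases "k = 0")
    case True
    with Suc.prems show ?thesis
      by (cases P) (auto simp: ek_def lval_def)
  next
    case False
    with Suc have "ek k P * lval (hd P) \<ge> 1"
      by simp
    moreover have "ek (Suc k) P \<noteq> 0"
      using prime_word_ek_nonzero[OF assms(1)] Suc.prems by blast
    ultimately show ?thesis
      using lval_cases[of "P ! k"] lval_cases[of "hd P"]
      by (auto simp: ek_Suc algebra_simps)
  qed
qed

lemma upper_primeI: "prime_word P \<Longrightarrow> hd P = R \<Longrightarrow> upper_prime P"
  using prime_word_ek_sign[of P] by (fastforce simp: upper_prime_def lval_def)

lemma lower_primeI: "prime_word P \<Longrightarrow> hd P = L \<Longrightarrow> lower_prime P"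
  using prime_word_ek_sign[of P] by (fastforce simp: lower_prime_def lval_def)

lemma prime_word_shape:
  assumes "prime_word P"
  obtains x y A where "P = x # A @ [y]" "x \<noteq> y" "balanced A"
proof -
  have P: "P \<noteq> []" "balanced P"
    using assms by (auto simp: prime_word_def)
  then obtain x T where P_eq: "P = x # T"
    by (cases P) auto
  with P(2) have "T \<noteq> []"
    by (cases x) (auto simp: balanced_def)
  then obtain A y where T_eq: "T = A @ [y]"
    by (cases T rule: rev_cases) auto
  define k where "k = length P - 1"
  have k: "0 < k" "k < length P"
    using P_eq T_eq by (auto simp: k_def)
  have "ek k P + lval y = 0"
    using P(2) ek_Suc[of k P] by (simp add: k_def P_eq T_eq balanced_iff_ek_length nth_append)
  with prime_word_ek_sign[OF assms k] have "x \<noteq> y"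
    using lval_cases[of x] by (auto simp: P_eq)
  moreover have "balanced A"
    using P(2) \<open>x \<noteq> y\<close>
    by (cases x; cases y) (auto simp: P_eq T_eq balanced_iff_sum_lval lval_def)
  ultimately show ?thesis
    using that P_eq T_eq by simp
qed

lemma symp_UD_swap: "symp UD_swap"
  by (rule sympI) (auto simp: UD_swap_def swap_of_type_def)

lemma UD_swaps_sym: "UD_swap\<^sup>*\<^sup>* X Y \<Longrightarrow> UD_swap\<^sup>*\<^sup>* Y X"
  using symp_rtranclp[OF symp_UD_swap] by (rule sympD)

lemma UD_swap_append: "UD_swap X Y \<Longrightarrow> UD_swap (u @ X @ v) (u @ Y @ v)"
  unfolding UD_swap_def swap_of_type_def
  by (elim exE conjE disjE) (metis append.assoc)+

lemma UD_swaps_append: "UD_swap\<^sup>*\<^sup>* X Y \<Longrightarrow> UD_swap\<^sup>*\<^sup>* (u @ X @ v) (u @ Y @ v)"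
  by (induction rule: rtranclp_induct) (auto intro: rtranclp.rtrancl_into_rtrancl UD_swap_append)

lemma UD_swap_upper_lower: "upper_prime U \<Longrightarrow> lower_prime D \<Longrightarrow> UD_swap (U @ D) (D @ U)"
  unfolding UD_swap_def swap_of_type_def by (metis append_Nil append_Nil2)

lemma UD_swaps_append_commute:
  assumes "UD_swap\<^sup>*\<^sup>* (A @ G) (G @ A)" "UD_swap\<^sup>*\<^sup>* (B @ G) (G @ B)"
  shows "UD_swap\<^sup>*\<^sup>* (A @ B @ G) (G @ A @ B)"
proof -
  have "UD_swap\<^sup>*\<^sup>* (A @ B @ G) (A @ G @ B)"
    using UD_swaps_append[OF assms(2), of A "[]"] by simp
  also have "UD_swap\<^sup>*\<^sup>* \<dots> (G @ A @ B)"
    using UD_swaps_append[OF assms(1), of "[]" B] by simp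
  finally show ?thesis .
qed

lemma UD_swaps_wrapped_commute:
  assumes "UD_swap\<^sup>*\<^sup>* (A @ [y, x]) ([y, x] @ A)" "UD_swap\<^sup>*\<^sup>* (A @ B) (B @ A)"
    and "UD_swap\<^sup>*\<^sup>* ([y, x] @ B) (B @ [y, x])"
  shows "UD_swap\<^sup>*\<^sup>* ((x # A @ [y]) @ (x # B @ [y])) ((x # B @ [y]) @ (x # A @ [y]))"
proof -
  have "UD_swap\<^sup>*\<^sup>* ([x] @ (A @ [y, x]) @ B @ [y]) ([x] @ ([y, x] @ A) @ B @ [y])"
    using UD_swaps_append[OF assms(1)] .
  also have "UD_swap\<^sup>*\<^sup>* \<dots> ([x, y, x] @ (B @ A) @ [y])"
    using UD_swaps_append[OF assms(2), of "[x, y, x]" "[y]"] by simp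
  also have "UD_swap\<^sup>*\<^sup>* \<dots> ([x] @ (B @ [y, x]) @ A @ [y])"
    using UD_swaps_append[OF assms(3), of "[x]" "A @ [y]"] by simp
  finally show ?thesis by simp
qed

lemma UD_swaps_commute_prime_words:
  assumes "prime_word F" "prime_word G"
    and shorter: "\<And>F' G'. length F' + length G' < length F + length G \<Longrightarrow>
      balanced F' \<Longrightarrow> balanced G' \<Longrightarrow> UD_swap\<^sup>*\<^sup>* (F' @ G') (G' @ F')"
  shows "UD_swap\<^sup>*\<^sup>* (F @ G) (G @ F)"
proof -
  obtain x y A where F: "F = x # A @ [y]" "x \<noteq> y" "balanced A"
    using prime_word_shape[OF assms(1)] by blast
  obtain x' y' B where G: "G = x' # B @ [y']" "x' \<noteq> y'" "balanced B"
    using prime_word_shape[OF assms(2)] by blast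
  show ?thesis
  proof (cases "x = x'")
    case True
    then have "y = y'"
      using F(2) G(2) by (cases x; cases y; cases y') auto
    have "balanced [y, x]"
      using F(2) by (cases x; cases y) (auto simp: balanced_def)
    then have "UD_swap\<^sup>*\<^sup>* (A @ [y, x]) ([y, x] @ A)" "UD_swap\<^sup>*\<^sup>* (A @ B) (B @ A)"
      "UD_swap\<^sup>*\<^sup>* ([y, x] @ B) (B @ [y, x])"
      using shorter[of A "[y, x]"] shorter[of A B] shorter[of "[y, x]" B] F G by auto
    then show ?thesis
      unfolding F(1) G(1) \<open>x = x'\<close> \<open>y = y'\<close> by (rule UD_swaps_wrapped_commute)
  next
    case False
    then consider "hd F = R" "hd G = L" | "hd F = L" "hd G = R"
      using F(1) G(1) by (cases x; cases x') auto
    then show ?thesis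
      using assms(1,2) by cases (auto intro: UD_swaps_sym UD_swap_upper_lower upper_primeI lower_primeI)
  qed
qed

theorem balanced_commute_UD_swaps:
  "balanced F \<Longrightarrow> balanced G \<Longrightarrow> UD_swap\<^sup>*\<^sup>* (F @ G) (G @ F)"
proof (induction "length F + length G" arbitrary: F G rule: less_induct)
  case less
  consider "F = [] \<or> G = []" | "\<not> prime_word F" "F \<noteq> []" | "\<not> prime_word G" "G \<noteq> []"
    | "prime_word F" "prime_word G"
    by blast
  then show ?case
  proof cases
    case 1
    then show ?thesis by auto
  next
    case 2
    then obtain A B where "A \<noteq> []" "B \<noteq> []" "balanced A" "balanced B" "F = A @ B"
      using less.prems by (auto simp: prime_word_def)
    with less have "UD_swap\<^sup>*\<^sup>* (A @ G) (G @ A)" "UD_swap\<^sup>*\<^sup>* (B @ G) (G @ B)"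
      by (auto intro!: less.hyps)
    then show ?thesis
      unfolding \<open>F = A @ B\<close> append.assoc by (rule UD_swaps_append_commute)
  next
    case 3
    then obtain A B where "A \<noteq> []" "B \<noteq> []" "balanced A" "balanced B" "G = A @ B"
      using less.prems by (auto simp: prime_word_def)
    with less have "UD_swap\<^sup>*\<^sup>* (A @ F) (F @ A)" "UD_swap\<^sup>*\<^sup>* (B @ F) (F @ B)"
      by (auto intro!: UD_swaps_sym less.hyps)
    then have "UD_swap\<^sup>*\<^sup>* (A @ B @ F) (F @ A @ B)"
      by (rule UD_swaps_append_commute)
    then show ?thesis
      using \<open>G = A @ B\<close> by (auto intro: UD_swaps_sym)
  next
    case 4
    then show ?thesis
      using less.hyps by (rule UD_swaps_commute_prime_words)
  qed
qed

definition alg_supp :: "alg \<Rightarrow> word set" where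
  "alg_supp a = {w. a w \<noteq> 0}"

definition pairing :: "alg \<Rightarrow> (word \<Rightarrow> complex) \<Rightarrow> complex" where
  "pairing a \<phi> = (\<Sum>w\<in>alg_supp a. a w * \<phi> w)"

definition swap_invariant :: "(word \<Rightarrow> 'b) \<Rightarrow> bool" where
  "swap_invariant \<phi> \<longleftrightarrow> (\<forall>u v F G. F \<noteq> [] \<longrightarrow> G \<noteq> [] \<longrightarrow> balanced F \<longrightarrow> balanced G \<longrightarrow>
     \<phi> (u @ F @ G @ v) = \<phi> (u @ G @ F @ v))"

lemma fin_supp_iff_finite_alg_supp: "fin_supp a \<longleftrightarrow> finite (alg_supp a)"
  by (simp add: fin_supp_def alg_supp_def)

lemma pairing_superset:
  "finite T \<Longrightarrow> alg_supp a \<subseteq> T \<Longrightarrow> pairing a \<phi> = (\<Sum>w\<in>T. a w * \<phi> w)"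
  unfolding pairing_def by (rule sum.mono_neutral_left) (auto simp: alg_supp_def)

lemma pairing_add:
  assumes "fin_supp a" "fin_supp b"
  shows "pairing (\<lambda>w. a w + b w) \<phi> = pairing a \<phi> + pairing b \<phi>"
proof -
  let ?T = "alg_supp a \<union> alg_supp b"
  have fin: "finite ?T"
    using assms by (simp add: fin_supp_iff_finite_alg_supp)
  have "alg_supp (\<lambda>w. a w + b w) \<subseteq> ?T"
    by (auto simp: alg_supp_def)
  then show ?thesis
    using pairing_superset[OF fin, of a] pairing_superset[OF fin, of b]
    by (simp add: pairing_superset[OF fin] distrib_right sum.distrib)
qed

lemma pairing_mon_diff: "pairing (\<lambda>w. mon X w - mon Y w) \<phi> = \<phi> X - \<phi> Y"
proof (cases "X = Y")
  case True
  then show ?thesis by (simp add: pairing_def alg_supp_def)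
next
  case False
  have "alg_supp (\<lambda>w. mon X w - mon Y w) \<subseteq> {X, Y}"
    by (auto simp: alg_supp_def mon_def)
  with False show ?thesis
    by (simp add: pairing_superset[of "{X, Y}"] mon_def)
qed

lemma amul_eq_sum_splits: "amul p q w = (\<Sum>(u, v) \<in> {(u, v). u @ v = w}. p u * q v)"
proof -
  have "bij_betw (\<lambda>i. (take i w, drop i w)) {..length w} {(u, v). u @ v = w}"
    by (rule bij_betw_byWitness[where f' = "\<lambda>(u, v). length u"]) auto
  then show ?thesis
    unfolding amul_def by (simp add: sum.reindex_bij_betw[symmetric])
qed

lemma amul_eq_sum_supp:
  "amul p q w = (\<Sum>(u, v) \<in> {(u, v) \<in> alg_supp p \<times> alg_supp q. u @ v = w}. p u * q v)"
  unfolding amul_eq_sum_splits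
proof (rule sum.mono_neutral_right)
  have "{(u, v). u @ v = w} \<subseteq> (\<lambda>i. (take i w, drop i w)) ` {..length w}"
  proof (clarify)
    fix u v
    show "(u, v) \<in> (\<lambda>i. (take i (u @ v), drop i (u @ v))) ` {..length (u @ v)}"
      by (rule image_eqI[where x = "length u"]) auto
  qed
  then show "finite {(u, v). u @ v = w}"
    by (rule finite_surj[rotated]) simp
qed (auto simp: alg_supp_def)

lemma alg_supp_amul: "alg_supp (amul p q) \<subseteq> (\<lambda>(u, v). u @ v) ` (alg_supp p \<times> alg_supp q)"
proof
  fix w
  assume "w \<in> alg_supp (amul p q)"
  then have "amul p q w \<noteq> 0"
    by (simp add: alg_supp_def)
  then obtain x where "x \<in> {(u, v) \<in> alg_supp p \<times> alg_supp q. u @ v = w}"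
    by (subst (asm) amul_eq_sum_supp) (erule sum.not_neutral_contains_not_neutral)
  then show "w \<in> (\<lambda>(u, v). u @ v) ` (alg_supp p \<times> alg_supp q)"
    by auto
qed

lemma fin_supp_amul: "fin_supp p \<Longrightarrow> fin_supp q \<Longrightarrow> fin_supp (amul p q)"
  unfolding fin_supp_iff_finite_alg_supp
  by (meson alg_supp_amul finite_cartesian_product finite_imageI finite_subset)

lemma pairing_amul:
  assumes "fin_supp p" "fin_supp q"
  shows "pairing (amul p q) \<phi> = (\<Sum>u\<in>alg_supp p. \<Sum>v\<in>alg_supp q. p u * q v * \<phi> (u @ v))"
proof -
  let ?S = "alg_supp p \<times> alg_supp q"
  let ?cat = "\<lambda>(u, v). u @ v"
  have fin: "finite ?S" "finite (?cat ` ?S)"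
    using assms by (simp_all add: fin_supp_iff_finite_alg_supp)
  have "pairing (amul p q) \<phi> = (\<Sum>w\<in>?cat ` ?S. amul p q w * \<phi> w)"
    by (rule pairing_superset[OF fin(2) alg_supp_amul])
  also have "\<dots> = (\<Sum>w\<in>?cat ` ?S. \<Sum>x\<in>{x \<in> ?S. ?cat x = w}. case x of (u, v) \<Rightarrow> p u * q v * \<phi> (u @ v))"
    unfolding amul_eq_sum_supp sum_distrib_right by (intro sum.cong) auto
  also have "\<dots> = (\<Sum>(u, v)\<in>?S. p u * q v * \<phi> (u @ v))"
    using fin by (rule sum.group) simp
  also have "\<dots> = (\<Sum>u\<in>alg_supp p. \<Sum>v\<in>alg_supp q. p u * q v * \<phi> (u @ v))"
    by (rule sum.cartesian_product[symmetric])
  finally show ?thesis .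
qed

lemma swap_invariant_append:
  "swap_invariant \<phi> \<Longrightarrow> swap_invariant (\<lambda>w. \<phi> (u @ w @ v))"
  unfolding swap_invariant_def by (metis append.assoc)

lemma Jideal_fin_supp: "a \<in> Jideal \<Longrightarrow> fin_supp a"
proof (induction rule: Jideal.induct)
  case (gen F G)
  have "{w. mon (F @ G) w - mon (G @ F) w \<noteq> 0} \<subseteq> {F @ G, G @ F}"
    by (auto simp: mon_def)
  then show ?case
    by (auto simp: fin_supp_def intro: finite_subset)
next
  case (add a b)
  have "{w. a w + b w \<noteq> 0} \<subseteq> {w. a w \<noteq> 0} \<union> {w. b w \<noteq> 0}"
    by auto
  with add.IH show ?case
    by (auto simp: fin_supp_def intro: finite_subset)
next
  case zero
  then show ?case by (simp add: fin_supp_def)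
next
  case (lmul c a)
  then show ?case by (simp add: fin_supp_amul)
next
  case (rmul c a)
  then show ?case by (simp add: fin_supp_amul)
qed

lemma pairing_Jideal_eq_0: "a \<in> Jideal \<Longrightarrow> swap_invariant \<phi> \<Longrightarrow> pairing a \<phi> = 0"
proof (induction arbitrary: \<phi> rule: Jideal.induct)
  case (gen F G)
  then have "\<phi> ([] @ F @ G @ []) = \<phi> ([] @ G @ F @ [])"
    unfolding swap_invariant_def by blast
  then show ?case
    by (simp add: pairing_mon_diff)
next
  case zero
  then show ?case by (simp add: pairing_def alg_supp_def)
next
  case (add a b)
  then show ?case by (simp add: pairing_add Jideal_fin_supp)
next
  case (lmul c a)
  have "pairing (amul c a) \<phi> = (\<Sum>u\<in>alg_supp c. \<Sum>v\<in>alg_supp a. c u * a v * \<phi> (u @ v))"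
    using lmul.hyps by (simp add: pairing_amul Jideal_fin_supp)
  also have "\<dots> = (\<Sum>u\<in>alg_supp c. c u * pairing a (\<lambda>v. \<phi> (u @ v)))"
    by (simp add: pairing_def sum_distrib_left mult.assoc)
  also have "\<dots> = 0"
    using lmul.IH swap_invariant_append[OF lmul.prems, where v = "[]"] by simp
  finally show ?case .
next
  case (rmul c a)
  have "pairing (amul a c) \<phi> = (\<Sum>u\<in>alg_supp a. \<Sum>v\<in>alg_supp c. a u * c v * \<phi> (u @ v))"
    using rmul.hyps by (simp add: pairing_amul Jideal_fin_supp)
  also have "\<dots> = (\<Sum>v\<in>alg_supp c. c v * pairing a (\<lambda>u. \<phi> (u @ v)))"
    by (subst sum.swap) (simp add: pairing_def sum_distrib_left mult_ac)
  also have "\<dots> = 0"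
    using rmul.IH swap_invariant_append[OF rmul.prems, where u = "[]"] by simp
  finally show ?case .
qed

lemma swap_invariant_UD_swaps: "swap_invariant (UD_swap\<^sup>*\<^sup>* X)"
  unfolding swap_invariant_def
proof (intro allI impI)
  fix u v F G :: word
  assume "balanced F" "balanced G"
  then have "UD_swap\<^sup>*\<^sup>* (u @ F @ G @ v) (u @ G @ F @ v)"
    using UD_swaps_append[OF balanced_commute_UD_swaps] by simp
  then show "UD_swap\<^sup>*\<^sup>* X (u @ F @ G @ v) = UD_swap\<^sup>*\<^sup>* X (u @ G @ F @ v)"
    using UD_swaps_sym rtranclp_trans by metis
qed

lemma sim_imp_UD_swaps: "sim X Y \<Longrightarrow> UD_swap\<^sup>*\<^sup>* X Y"
proof -
  assume "sim X Y"
  let ?\<phi> = "\<lambda>w. of_bool (UD_swap\<^sup>*\<^sup>* X w) :: complex"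
  have "swap_invariant ?\<phi>"
    using swap_invariant_UD_swaps[of X] by (simp add: swap_invariant_def)
  with \<open>sim X Y\<close> have "pairing (\<lambda>w. mon X w - mon Y w) ?\<phi> = 0"
    unfolding sim_def by (rule pairing_Jideal_eq_0)
  then have "?\<phi> X - ?\<phi> Y = 0"
    by (simp only: pairing_mon_diff)
  then show ?thesis
    by simp
qed

lemma amul_mon_mon: "amul (mon u) (mon v) = mon (u @ v)"
proof
  fix w
  have "alg_supp (mon u) = {u}" "alg_supp (mon v) = {v}"
    by (auto simp: alg_supp_def mon_def)
  then have "{(x, y) \<in> alg_supp (mon u) \<times> alg_supp (mon v). x @ y = w} =
      (if w = u @ v then {(u, v)} else {})"
    by auto
  then show "amul (mon u) (mon v) w = mon (u @ v) w"
    by (simp add: amul_eq_sum_supp mon_def)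
qed

lemma amul_diff_left: "amul (\<lambda>w. p w - q w) r = (\<lambda>w. amul p r w - amul q r w)"
  by (simp add: amul_def left_diff_distrib sum_subtractf)

lemma amul_diff_right: "amul p (\<lambda>w. q w - r w) = (\<lambda>w. amul p q w - amul p r w)"
  by (simp add: amul_def right_diff_distrib sum_subtractf)

lemma sim_refl: "sim X X"
  unfolding sim_def using Jideal.zero by simp

lemma sim_trans: "sim X Y \<Longrightarrow> sim Y Z \<Longrightarrow> sim X Z"
  unfolding sim_def using Jideal.add by fastforce

lemma fin_supp_mon: "fin_supp (mon u)"
  by (simp add: fin_supp_def mon_def)

lemma sim_swap:
  assumes "F \<noteq> []" "G \<noteq> []" "balanced F" "balanced G"
  shows "sim (W1 @ F @ G @ W2) (W1 @ G @ F @ W2)"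
proof -
  have "amul (mon W1) (amul (\<lambda>w. mon (F @ G) w - mon (G @ F) w) (mon W2)) \<in> Jideal"
    using assms by (intro Jideal.intros fin_supp_mon)
  then show ?thesis
    by (simp add: sim_def amul_diff_left amul_diff_right amul_mon_mon)
qed

lemma UD_swaps_imp_sim: "UD_swap\<^sup>*\<^sup>* X Y \<Longrightarrow> sim X Y"
proof (induction rule: rtranclp_induct)
  case base
  then show ?case by (rule sim_refl)
next
  case (step Y Z)
  then obtain U D where "upper_prime U" "lower_prime D" "swap_of_type U D Y Z"
    by (auto simp: UD_swap_def)
  then have "sim Y Z"
    unfolding swap_of_type_def upper_prime_def lower_prime_def prime_word_def
    by (auto intro: sim_swap)
  with step.IH show ?case
    by (rule sim_trans)
qed

theorem corollary5p4:
  fixes X Y :: word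
  shows "sim X Y \<longleftrightarrow> UD_swap\<^sup>*\<^sup>* X Y"
  using sim_imp_UD_swaps UD_swaps_imp_sim by blast

end
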